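(* In the model described in the context, any available a-audit operation (one that collects the logs of an auditing quorum of $n-f$ storage objects) obtains, for every reader $p_r$ and value $v$ such that $v$ was effectively read by $p_r$ before the audit was invoked, records $\langle p_r,\mathit{label}(v)\rangle$ from at least $\tau-2f$ distinct objects.
   Context: Model. An asynchronous system has client processes (writers, readers, auditors) and $n$ storage objects $o_1,\dots,o_n$. Each $o_k$ is a linearisable loggable read/write register with a log $L_k$ (initially empty). Its operations are: rw-write($b$), which stores block $b$; rw-read(), which returns the current block (or $\perp$) and appends $\langle p_r,\mathit{label}(b)\rangle$ to $L_k$, where $p_r$ is the invoking reader and $\mathit{label}(b)$ identifies the value from which $b$ was derived; and rw-getLog(), which returns $L_k$. A multi-writer multi-reader register over values $\mathbb{V}$ is emulated by information dispersal. An a-write($v$) encodes $v$ into $b_{v_1},\dots,b_{v_n}$ and sends $b_{v_k}$ to $o_k$. Any $\tau$ distinct blocks of $v$ suffice to recover $v$, and fewer do not; $\tau>f$. Reads are fast (one round-trip), and concurrency is unlimited. Faults. At most $f$ storage objects are faulty. A faulty object may crash, omit its block from readers, omit log records from auditors, and report records of nonexistent reads. Correct objects follow the specification. Providing set $P_{p_r,v}$: the set of objects $o_k$ that, in the history, received a write request for $b_{v_k}$ and responded $b_{v_k}$ to a read request of $p_r$. The value $v$ is effectively read by $p_r$ iff $|P_{p_r,v}|\ge\tau$. An a-audit queries objects with rw-getLog; to be available, it uses only the logs returned by an auditing quorum of $n-f$ objects. *)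

theory Defs
  imports Main
begin

text \<open>Blocks: the k-th block of value v produced by the dispersal encoding is Blk v k.
  The block records the value it was derived from.\<close>
datatype 'v blk = Blk (blk_val: 'v) (blk_idx: nat)

text \<open>Operations at a storage object, together with their responses.
  'p: client processes, 'v: values, 'l: labels.\<close>
datatype ('p, 'v, 'l) rw_op =
    RWWrite "'v blk"
  | RWRead 'p "'v blk option"
  | RWGetLog 'p "('p \<times> 'l) list"

text \<open>A history of one object: its operations in linearisation order, each tagged
  with its (real-time) linearisation point.\<close>
type_synonym ('p, 'v, 'l) obj_hist = "(nat \<times> ('p, 'v, 'l) rw_op) list"

definition cur_blk :: "('p, 'v, 'l) obj_hist \<Rightarrow> 'v blk option" where
  "cur_blk es = (case [b. (t, RWWrite b) \<leftarrow> es] of [] \<Rightarrow> None | bs \<Rightarrow> Some (last bs))"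

definition log_of :: "('v \<Rightarrow> 'l) \<Rightarrow> ('p, 'v, 'l) obj_hist \<Rightarrow> ('p \<times> 'l) list" where
  "log_of lab es = [(p, lab (blk_val b)). (t, RWRead p (Some b)) \<leftarrow> es]"

text \<open>A correct object is a linearisable loggable read/write register: rw-read returns
  the current block (or None = bottom) and appends the record of the reader and the label;
  rw-getLog returns the current log.\<close>
definition correct_hist :: "('v \<Rightarrow> 'l) \<Rightarrow> ('p, 'v, 'l) obj_hist \<Rightarrow> bool" where
  "correct_hist lab es \<longleftrightarrow>
     sorted_wrt (<) (map fst es) \<and>
     (\<forall>i < length es. case snd (es ! i) of
         RWWrite b \<Rightarrow> True
       | RWRead p r \<Rightarrow> r = cur_blk (take i es)
       | RWGetLog p L \<Rightarrow> L = log_of lab (take i es))"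

definition providing_set ::
  "nat \<Rightarrow> (nat \<Rightarrow> ('p, 'v, 'l) obj_hist) \<Rightarrow> 'p \<Rightarrow> 'v \<Rightarrow> nat \<Rightarrow> nat set" where
  "providing_set n H p v t0 =
     {k \<in> {..<n}. (\<exists>t. (t, RWWrite (Blk v k)) \<in> set (H k)) \<and>
                 (\<exists>t < t0. (t, RWRead p (Some (Blk v k))) \<in> set (H k))}"

definition effectively_read_before ::
  "nat \<Rightarrow> nat \<Rightarrow> (nat \<Rightarrow> ('p, 'v, 'l) obj_hist) \<Rightarrow> 'p \<Rightarrow> 'v \<Rightarrow> nat \<Rightarrow> bool" where
  "effectively_read_before n \<tau> H p v t0 \<longleftrightarrow> card (providing_set n H p v t0) \<ge> \<tau>"

end

theory Submission
  imports Defs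
begin

text \<open>Of the at least \<open>\<tau>\<close> objects providing \<open>v\<close> to \<open>p\<close> before the audit, at most \<open>f\<close>
  lie outside the auditing quorum (which misses only \<open>f\<close> of the \<open>n\<close> objects) and at most
  \<open>f\<close> are faulty. Every remaining one is a correct quorum member, whose rw-getLog is
  linearised after the read it served, so the log it returned contains the read's record.\<close>

lemma log_of_memI:
  assumes "(t, RWRead p (Some b)) \<in> set es"
  shows "(p, lab (blk_val b)) \<in> set (log_of lab es)"
  using assms
proof (induction es)
  case Nil
  then show ?case by simp
next
  case (Cons e es)
  then show ?case
    by (cases e) (auto simp: log_of_def split: rw_op.splits option.splits)
qed

lemma sorted_wrt_less_nth_index_less:
  fixes xs :: "'a :: order list"
  assumes "sorted_wrt (<) xs" "i < length xs" "j < length xs" "xs ! i < xs ! j"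
  shows "i < j"
proof (rule ccontr)
  assume "\<not> i < j"
  then consider "j = i" | "j < i" by linarith
  then show False
    using assms sorted_wrt_nth_less[OF assms(1), of j i] by cases (auto dest: less_asym)
qed

lemma correct_hist_getLog_contains_earlier_read:
  assumes correct: "correct_hist lab es"
    and read: "(t, RWRead p (Some b)) \<in> set es"
    and getLog: "(t', RWGetLog a L) \<in> set es"
    and "t < t'"
  shows "(p, lab (blk_val b)) \<in> set L"
proof -
  obtain i where i: "i < length es" "es ! i = (t, RWRead p (Some b))"
    using read by (metis in_set_conv_nth)
  obtain j where j: "j < length es" "es ! j = (t', RWGetLog a L)"
    using getLog by (metis in_set_conv_nth)
  have "sorted_wrt (<) (map fst es)"
    using correct by (simp add: correct_hist_def)
  then have "i < j"
    using sorted_wrt_less_nth_index_less[of "map fst es" i j] i j \<open>t < t'\<close> by simp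
  then have "(t, RWRead p (Some b)) \<in> set (take j es)"
    using i by (metis in_set_conv_nth length_take min_less_iff_conj nth_take)
  moreover have "L = log_of lab (take j es)"
    using correct j unfolding correct_hist_def by (auto dest!: spec[of _ j])
  ultimately show ?thesis
    using log_of_memI by metis
qed

lemma card_Diff_Diff_ge:
  assumes "finite A" "finite B"
  shows "card P - card A - card B \<le> card (P - A - B)"
proof -
  have "card P - card A \<le> card (P - A)"
    by (rule diff_card_le_card_Diff) (use assms in auto)
  moreover have "card (P - A) - card B \<le> card (P - A - B)"
    by (rule diff_card_le_card_Diff) (use assms in auto)
  ultimately show ?thesis by linarith
qed

theorem lemma1:
  fixes n f \<tau> :: nat
    and lab :: "'v \<Rightarrow> 'l"
    and H :: "nat \<Rightarrow> ('p, 'v, 'l) obj_hist"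
    and F Q :: "nat set"
    and a :: 'p
    and t0 :: nat
    and R :: "nat \<Rightarrow> ('p \<times> 'l) list"
  assumes tau_gt_f: "f < \<tau>"
    and faulty: "F \<subseteq> {..<n}" "card F \<le> f"
    and correct: "\<forall>k \<in> {..<n} - F. correct_hist lab (H k)"
    and quorum: "Q \<subseteq> {..<n}" "card Q = n - f"
    and audit: "\<forall>k \<in> Q. \<exists>t \<ge> t0. (t, RWGetLog a (R k)) \<in> set (H k)"
  shows "\<forall>p v. effectively_read_before n \<tau> H p v t0 \<longrightarrow>
            \<tau> - 2 * f \<le> card {k \<in> Q. (p, lab v) \<in> set (R k)}"
proof (intro allI impI)
  fix p v
  define P where "P = providing_set n H p v t0"
  assume "effectively_read_before n \<tau> H p v t0"
  then have "\<tau> \<le> card P"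
    by (simp add: P_def effectively_read_before_def)
  have "P - ({..<n} - Q) - F \<subseteq> {k \<in> Q. (p, lab v) \<in> set (R k)}"
  proof
    fix k
    assume k: "k \<in> P - ({..<n} - Q) - F"
    then obtain t where "t < t0" "(t, RWRead p (Some (Blk v k))) \<in> set (H k)"
      and "k \<in> Q" "k \<notin> F" "k < n"
      by (auto simp: P_def providing_set_def)
    moreover obtain t' where "t' \<ge> t0" "(t', RWGetLog a (R k)) \<in> set (H k)"
      using audit \<open>k \<in> Q\<close> by blast
    ultimately show "k \<in> {k \<in> Q. (p, lab v) \<in> set (R k)}"
      using correct correct_hist_getLog_contains_earlier_read[of lab "H k"] by force
  qed
  then have "card (P - ({..<n} - Q) - F) \<le> card {k \<in> Q. (p, lab v) \<in> set (R k)}"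
    using quorum(1) by (intro card_mono) (auto intro: finite_subset)
  moreover have "card P - card ({..<n} - Q) - card F \<le> card (P - ({..<n} - Q) - F)"
    using faulty(1) by (intro card_Diff_Diff_ge) (auto intro: finite_subset)
  moreover have "card ({..<n} - Q) \<le> f"
    using quorum by (simp add: card_Diff_subset finite_subset)
  ultimately show "\<tau> - 2 * f \<le> card {k \<in> Q. (p, lab v) \<in> set (R k)}"
    using \<open>\<tau> \<le> card P\<close> faulty(2) by linarith
qed

end
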